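(* Let $P$ and $Q$ be face posets of $d$-dimensional convex polytopes, with maximum elements $\hat 1^P,\hat 1^Q$, and let $R$ be the face poset of a $(d-1)$-dimensional convex polytope, with maximum element $\hat 1^R$. Suppose $F_P\in P$ and $F_Q\in Q$ are elements of rank $d-1$ and $\phi^P:R\to[\emptyset,F_P]$, $\phi^Q:R\to[\emptyset,F_Q]$ are rank-preserving poset isomorphisms. Define the poset $Gl=Gl(P,Q,R)$ with underlying set the disjoint union $$\bigl(P\setminus([\emptyset,F_P]\cup\{\hat 1^P\})\bigr)\ \sqcup\ \bigl(Q\setminus([\emptyset,F_Q]\cup\{\hat 1^Q\})\bigr)\ \sqcup\ \bigl(R\setminus\{\hat 1^R\}\bigr)\ \sqcup\ \{\hat 1\},$$ ranks inherited from $P,Q,R$ and $|\hat 1|=d$, and order: $\hat 1$ is above every element; two elements of the $P$-part (resp. $Q$-part, $R$-part) compare as in $P$ (resp. $Q$, $R$); for $a$ in the $P$-part and $r$ in the $R$-part, $a\le r$ iff $a\le_P\phi^P(r)$ and $r\le a$ iff $\phi^P(r)\le_P a$; likewise for the $Q$-part with $\phi^Q$; elements of the $P$-part and the $Q$-part are incomparable. Then $$\mathcal{M}_{Gl}(z)=\mathcal{M}_P(z)+\mathcal{M}_Q(z)-\mathcal{M}_R(z)-1+z-(1-z)\,g^R_{d-1}(z).$$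
   Context: The face poset of a convex polytope with vertex set $V$ is the set of vertex sets of its faces (including the whole polytope) together with $\emptyset$, ordered by inclusion, ranked by dimension ($|\emptyset|=-1$). $[a,b]=\{s:a\le s\le b\}$. (Geometrically, $Gl$ is the face poset of the polytope obtained by gluing the two polytopes along a common facet isomorphic to the polytope of $R$ and deleting that interior facet, assuming no faces merge.) The Möbius function $\mu$ is $\mu[p,p]=1$, $\mu[p,q]=-\sum_{p\le s<q}\mu[p,s]$ for $p<q$, $0$ if $p\not\le q$; $\mu_z[p,q]=\mu[p,q]z^{|q|-|p|}$; $\mathcal{M}_P(z)=\sum_{p\le q\in P}\mu_z[p,q]$; the top polynomial of $R$ (rank $d-1$) is $g^R_{d-1}(z)=\sum_{p\le q,\ |p|\le d-1\le|q|}\mu_z[p,q]$. *)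

theory Defs
  imports "HOL-Analysis.Analysis" "HOL-Computational_Algebra.Polynomial"
begin

definition vertex_set :: "'a::euclidean_space set \<Rightarrow> 'a set" where
  "vertex_set F = {v. v extreme_point_of F}"

text \<open>Face poset: vertex sets of all faces (including the empty face and the whole
  polytope), ordered by inclusion.\<close>
definition face_poset :: "'a::euclidean_space set \<Rightarrow> 'a set set" where
  "face_poset K = {vertex_set F | F. F face_of K}"

text \<open>Rank = dimension of the face spanned by the vertex set (so the empty set has rank -1).\<close>
definition face_rank :: "'a::euclidean_space set \<Rightarrow> int" where
  "face_rank p = aff_dim (convex hull p)"

definition mobius :: "'x set \<Rightarrow> ('x \<Rightarrow> 'x \<Rightarrow> bool) \<Rightarrow> 'x \<Rightarrow> 'x \<Rightarrow> int" where
  "mobius S le = (THE mu. \<forall>p q. mu p q =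
      (if p \<in> S \<and> q \<in> S \<and> le p q then
         (if p = q then 1 else - (\<Sum>s\<in>{s\<in>S. le p s \<and> le s q \<and> s \<noteq> q}. mu p s))
       else 0))"

definition mobius_z :: "'x set \<Rightarrow> ('x \<Rightarrow> 'x \<Rightarrow> bool) \<Rightarrow> ('x \<Rightarrow> int) \<Rightarrow> 'x \<Rightarrow> 'x \<Rightarrow> int poly" where
  "mobius_z S le rk p q = monom (mobius S le p q) (nat (rk q - rk p))"

definition mobius_poly :: "'x set \<Rightarrow> ('x \<Rightarrow> 'x \<Rightarrow> bool) \<Rightarrow> ('x \<Rightarrow> int) \<Rightarrow> int poly" where
  "mobius_poly S le rk =
     (\<Sum>(p,q)\<in>{(p,q). p \<in> S \<and> q \<in> S \<and> le p q}. mobius_z S le rk p q)"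

definition top_poly :: "'x set \<Rightarrow> ('x \<Rightarrow> 'x \<Rightarrow> bool) \<Rightarrow> ('x \<Rightarrow> int) \<Rightarrow> int \<Rightarrow> int poly" where
  "top_poly S le rk k =
     (\<Sum>(p,q)\<in>{(p,q). p \<in> S \<and> q \<in> S \<and> le p q \<and> rk p \<le> k \<and> k \<le> rk q}. mobius_z S le rk p q)"

datatype ('p, 'q, 'r) glel = GP 'p | GQ 'q | GR 'r | GTop

definition gl_carrier ::
  "'p set set \<Rightarrow> 'q set set \<Rightarrow> 'r set set \<Rightarrow> 'p set \<Rightarrow> 'q set \<Rightarrow>
   'p set \<Rightarrow> 'q set \<Rightarrow> 'r set \<Rightarrow> ('p set, 'q set, 'r set) glel set" where
  "gl_carrier P Q R FP FQ topP topQ topR =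
     GP ` (P - ({s\<in>P. s \<subseteq> FP} \<union> {topP})) \<union>
     GQ ` (Q - ({s\<in>Q. s \<subseteq> FQ} \<union> {topQ})) \<union>
     GR ` (R - {topR}) \<union> {GTop}"

fun gl_le ::
  "('r set \<Rightarrow> 'p set) \<Rightarrow> ('r set \<Rightarrow> 'q set) \<Rightarrow>
   ('p set, 'q set, 'r set) glel \<Rightarrow> ('p set, 'q set, 'r set) glel \<Rightarrow> bool" where
  "gl_le phiP phiQ _ GTop = True"
| "gl_le phiP phiQ GTop _ = False"
| "gl_le phiP phiQ (GP a) (GP b) = (a \<subseteq> b)"
| "gl_le phiP phiQ (GQ a) (GQ b) = (a \<subseteq> b)"
| "gl_le phiP phiQ (GR r) (GR s) = (r \<subseteq> s)"
| "gl_le phiP phiQ (GP a) (GR r) = (a \<subseteq> phiP r)"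
| "gl_le phiP phiQ (GR r) (GP a) = (phiP r \<subseteq> a)"
| "gl_le phiP phiQ (GQ a) (GR r) = (a \<subseteq> phiQ r)"
| "gl_le phiP phiQ (GR r) (GQ a) = (phiQ r \<subseteq> a)"
| "gl_le phiP phiQ (GP a) (GQ b) = False"
| "gl_le phiP phiQ (GQ a) (GP b) = False"

fun gl_rank :: "nat \<Rightarrow> ('p::euclidean_space set, 'q::euclidean_space set, 'r::euclidean_space set) glel \<Rightarrow> int" where
  "gl_rank d (GP a) = face_rank a"
| "gl_rank d (GQ a) = face_rank a"
| "gl_rank d (GR r) = face_rank r"
| "gl_rank d GTop = int d"

end

theory Submission
  imports Defs
begin

text \<open>
  Write \<open>\<M>\<close> as a sum of row sums \<open>\<rho>(p) = \<Sum>\<^sub>q \<mu>\<^sub>z[p,q]\<close>; a row sum only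
  depends on the upper set of \<open>p\<close>.  In the glued poset the upper set of an element of the
  \<open>P\<close>-part is that of \<open>P\<close> (with \<open>1\<^sup>P\<close> renamed \<open>1\<close>), and similarly for \<open>Q\<close>.  For
  \<open>r\<close> in the \<open>R\<close>-part, the elements below \<open>1\<close> lying on the \<open>P\<close>-side form a convex
  subposet isomorphic to \<open>P \<setminus> {F\<^sub>P, 1\<^sup>P}\<close>, so \<open>\<mu>\<^sub>G\<^sub>l[r,x] = \<mu>\<^sub>P[\<phi>\<^sup>P r, x]\<close> there,
  and likewise on the \<open>Q\<close>-side; the one new entry is then forced by the recursion:
  \<open>\<mu>\<^sub>G\<^sub>l[r,1] = \<mu>\<^sub>P[\<phi>\<^sup>P r,1\<^sup>P] + \<mu>\<^sub>Q[\<phi>\<^sup>Q r,1\<^sup>Q] + \<mu>\<^sub>R[r,1\<^sup>R]\<close>, where the extra rank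
  of \<open>1\<close> over \<open>1\<^sup>R\<close> produces the factor \<open>z\<close>.  Summing the rows, the facets (row sum
  \<open>1 - z\<close>) and the three tops (row sum \<open>1\<close>) account for the correction terms.
\<close>

section \<open>Moebius functions of finite posets\<close>

definition poset_on :: "'x set \<Rightarrow> ('x \<Rightarrow> 'x \<Rightarrow> bool) \<Rightarrow> bool" where
  "poset_on S le \<longleftrightarrow> (\<forall>x\<in>S. le x x) \<and> (\<forall>x\<in>S. \<forall>y\<in>S. le x y \<longrightarrow> le y x \<longrightarrow> x = y)
     \<and> (\<forall>x\<in>S. \<forall>y\<in>S. \<forall>z\<in>S. le x y \<longrightarrow> le y z \<longrightarrow> le x z)"

lemma poset_on_refl: "poset_on S le \<Longrightarrow> x \<in> S \<Longrightarrow> le x x"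
  unfolding poset_on_def by blast

lemma poset_on_trans:
  "poset_on S le \<Longrightarrow> le x y \<Longrightarrow> le y z \<Longrightarrow> x \<in> S \<Longrightarrow> y \<in> S \<Longrightarrow> z \<in> S \<Longrightarrow> le x z"
  unfolding poset_on_def by blast

lemma poset_on_subset: "poset_on S (\<subseteq>)"
  unfolding poset_on_def by auto

definition order_convex :: "'x set \<Rightarrow> ('x \<Rightarrow> 'x \<Rightarrow> bool) \<Rightarrow> 'x set \<Rightarrow> bool" where
  "order_convex S le A \<longleftrightarrow> (\<forall>x\<in>A. \<forall>z\<in>A. \<forall>y\<in>S. le x y \<longrightarrow> le y z \<longrightarrow> y \<in> A)"

lemma order_convex_carrier [simp]: "order_convex S le S"
  unfolding order_convex_def by blast

lemma card_down_set_less: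
  assumes "finite S" "poset_on S le" "s \<in> S" "q \<in> S" "le s q" "s \<noteq> q"
  shows "card {t\<in>S. le t s} < card {t\<in>S. le t q}"
proof (rule psubset_card_mono)
  show "{t\<in>S. le t s} \<subset> {t\<in>S. le t q}"
    using assms unfolding poset_on_def by blast
qed (use assms(1) in simp)

lemma wf_strict_order_on:
  assumes "finite S" "poset_on S le"
  shows "wf {(s, q). s \<in> S \<and> q \<in> S \<and> le s q \<and> s \<noteq> q}"
  by (rule wf_subset[OF wf_measure[of "\<lambda>q. card {t\<in>S. le t q}"]])
     (use card_down_set_less[OF assms] in fastforce)

text \<open>The \<open>THE\<close> in the definition of \<open>mobius\<close> is justified: on a finite poset the
  recursion runs along a well-founded relation, so it has exactly one solution.\<close>

lemma mobius_rec:
  assumes "finite S" "poset_on S le"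
  shows "mobius S le p q =
    (if p \<in> S \<and> q \<in> S \<and> le p q then
       (if p = q then 1 else - (\<Sum>s\<in>{s\<in>S. le p s \<and> le s q \<and> s \<noteq> q}. mobius S le p s))
     else 0)"
proof -
  let ?R = "{(s, q). s \<in> S \<and> q \<in> S \<and> le s q \<and> s \<noteq> q}"
  let ?F = "\<lambda>(mu :: 'a \<Rightarrow> 'a \<Rightarrow> int) p q.
    if p \<in> S \<and> q \<in> S \<and> le p q then
      (if p = q then 1 else - (\<Sum>s\<in>{s\<in>S. le p s \<and> le s q \<and> s \<noteq> q}. mu p s))
    else 0"
  have wf: "wf ?R" by (rule wf_strict_order_on[OF assms])
  define mu0 where "mu0 p = wfrec ?R (\<lambda>g. ?F (\<lambda>_. g) p)" for p
  have mu0: "mu0 p q = ?F mu0 p q" for p q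
  proof -
    have "mu0 p q = ?F (\<lambda>_. cut (mu0 p) ?R q) p q"
      unfolding mu0_def by (subst wfrec[OF wf]) simp
    also have "\<dots> = ?F mu0 p q"
      by (cases "q \<in> S") (auto intro!: sum.cong simp add: cut_apply)
    finally show ?thesis .
  qed
  have unique: "mu1 = mu2"
    if mu1: "\<And>p q. mu1 p q = ?F mu1 p q" and mu2: "\<And>p q. mu2 p q = ?F mu2 p q" for mu1 mu2
  proof (intro ext)
    fix p q
    show "mu1 p q = mu2 p q"
    proof (induction q rule: wf_induct_rule[OF wf])
      case (1 q)
      then have "?F mu1 p q = ?F mu2 p q" by (auto intro!: sum.cong)
      then show ?case by (simp only: mu1[of p q] mu2[of p q])
    qed
  qed
  have "\<exists>!mu. \<forall>p q. mu p q = ?F mu p q"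
  proof (rule ex1I[of _ mu0])
    show "\<forall>p q. mu0 p q = ?F mu0 p q" using mu0 by blast
    show "mu = mu0" if "\<forall>p q. mu p q = ?F mu p q" for mu
      by (rule unique) (use that mu0 in blast)+
  qed
  from theI'[OF this] show ?thesis
    unfolding mobius_def by (rule spec2)
qed

lemma mobius_eq_0:
  assumes "finite S" "poset_on S le" "\<not> (p \<in> S \<and> q \<in> S \<and> le p q)"
  shows "mobius S le p q = 0"
  unfolding mobius_rec[OF assms(1,2), of p q] using assms(3) by auto

lemma mobius_self:
  assumes "finite S" "poset_on S le" "p \<in> S"
  shows "mobius S le p p = 1"
  unfolding mobius_rec[OF assms(1,2), of p p] using assms poset_on_refl by simp

lemma sum_mobius_below_eq_0:
  assumes fin: "finite S" and po: "poset_on S le"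
    and "p \<in> S" "q \<in> S" "le p q" "p \<noteq> q"
  shows "(\<Sum>s\<in>{s\<in>S. le s q}. mobius S le p s) = 0"
proof -
  have "(\<Sum>s\<in>{s\<in>S. le s q}. mobius S le p s) = (\<Sum>s\<in>{s\<in>S. le p s \<and> le s q}. mobius S le p s)"
    by (rule sum.mono_neutral_right) (use fin mobius_eq_0[OF fin po] in auto)
  also have "{s\<in>S. le p s \<and> le s q} = insert q {s\<in>S. le p s \<and> le s q \<and> s \<noteq> q}"
    using assms po unfolding poset_on_def by blast
  also have "(\<Sum>s\<in>\<dots>. mobius S le p s)
      = mobius S le p q + (\<Sum>s\<in>{s\<in>S. le p s \<and> le s q \<and> s \<noteq> q}. mobius S le p s)"
    by (rule sum.insert) (use fin in auto)
  also have "\<dots> = 0" unfolding mobius_rec[OF fin po, of p q] using assms by simp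
  finally show ?thesis .
qed

text \<open>Moebius values only see intervals, and for order-convex \<open>A\<close> the intervals of \<open>A\<close>
  are intervals of \<open>S\<close>.\<close>

lemma mobius_order_iso:
  assumes finS: "finite S" and poS: "poset_on S le" and finT: "finite T" and poT: "poset_on T le'"
    and bij: "bij_betw f A B" and "A \<subseteq> S" "B \<subseteq> T"
    and iso: "\<forall>x\<in>A. \<forall>y\<in>A. le' (f x) (f y) \<longleftrightarrow> le x y"
    and convA: "order_convex S le A" and convB: "order_convex T le' B"
    and p: "p \<in> A"
  shows "q \<in> A \<Longrightarrow> mobius T le' (f p) (f q) = mobius S le p q"
proof (induction q rule: wf_induct_rule[OF wf_strict_order_on[OF finS poS]])
  case (1 q)
  have fA: "f p \<in> B" "f q \<in> B" using bij p 1 by (auto simp: bij_betw_def)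
  consider "\<not> le p q" | "p = q" | "le p q" "p \<noteq> q" by blast
  then show ?case
  proof cases
    case 1
    then show ?thesis
      using \<open>q \<in> A\<close> p iso mobius_eq_0[OF finS poS] mobius_eq_0[OF finT poT] by auto
  next
    case 2
    then show ?thesis
      using p fA \<open>A \<subseteq> S\<close> \<open>B \<subseteq> T\<close> mobius_self[OF finS poS] mobius_self[OF finT poT]
      by (simp add: subset_iff)
  next
    case 3
    let ?I = "{s\<in>S. le p s \<and> le s q \<and> s \<noteq> q}"
    let ?J = "{t\<in>T. le' (f p) t \<and> le' t (f q) \<and> t \<noteq> f q}"
    have inj: "inj_on f A" using bij by (rule bij_betw_imp_inj_on)
    have IA: "?I \<subseteq> A" using convA p \<open>q \<in> A\<close> unfolding order_convex_def by blast
    have "f ` ?I = ?J"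
    proof (intro equalityI subsetI)
      fix t assume "t \<in> f ` ?I"
      then show "t \<in> ?J"
        using IA iso p \<open>q \<in> A\<close> inj bij \<open>B \<subseteq> T\<close>
        by (auto simp: inj_on_eq_iff bij_betw_def subset_iff)
    next
      fix t assume t: "t \<in> ?J"
      then have "t \<in> B" using convB fA unfolding order_convex_def by blast
      then obtain u where "u \<in> A" "t = f u" using bij by (auto simp: bij_betw_def)
      then show "t \<in> f ` ?I"
        using t iso p \<open>q \<in> A\<close> \<open>A \<subseteq> S\<close> by auto
    qed
    then have "(\<Sum>t\<in>?J. mobius T le' (f p) t) = (\<Sum>s\<in>?I. mobius T le' (f p) (f s))"
      using sum.reindex[OF inj_on_subset[OF inj IA]] by simp
    also have "\<dots> = (\<Sum>s\<in>?I. mobius S le p s)"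
      using "1.IH" IA \<open>q \<in> A\<close> \<open>A \<subseteq> S\<close> by (intro sum.cong) auto
    moreover have "f p \<noteq> f q" using 3 inj p \<open>q \<in> A\<close> by (auto simp: inj_on_eq_iff)
    moreover have "f p \<in> T" "f q \<in> T" "le' (f p) (f q)" "p \<in> S" "q \<in> S"
      using 3 fA p \<open>q \<in> A\<close> iso \<open>A \<subseteq> S\<close> \<open>B \<subseteq> T\<close> by auto
    ultimately show ?thesis
      using 3 unfolding mobius_rec[OF finS poS, of p q] mobius_rec[OF finT poT, of "f p" "f q"] by simp
  qed
qed

lemma mobius_z_eq_0:
  "finite S \<Longrightarrow> poset_on S le \<Longrightarrow> \<not> (p \<in> S \<and> q \<in> S \<and> le p q) \<Longrightarrow> mobius_z S le rk p q = 0"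
  unfolding mobius_z_def by (simp add: mobius_eq_0)

definition mobius_row :: "'x set \<Rightarrow> ('x \<Rightarrow> 'x \<Rightarrow> bool) \<Rightarrow> ('x \<Rightarrow> int) \<Rightarrow> 'x \<Rightarrow> int poly" where
  "mobius_row S le rk p = (\<Sum>q\<in>S. mobius_z S le rk p q)"

lemma mobius_poly_eq_sum_rows:
  assumes "finite S" "poset_on S le"
  shows "mobius_poly S le rk = (\<Sum>p\<in>S. mobius_row S le rk p)"
proof -
  have "(\<Sum>p\<in>S. mobius_row S le rk p) = (\<Sum>(p, q)\<in>S \<times> S. mobius_z S le rk p q)"
    unfolding mobius_row_def by (rule sum.cartesian_product)
  also have "\<dots> = mobius_poly S le rk"
    unfolding mobius_poly_def
    by (rule sum.mono_neutral_right) (use assms mobius_z_eq_0[OF assms] in auto)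
  finally show ?thesis by simp
qed

lemma mobius_row_maximal:
  assumes fin: "finite S" and po: "poset_on S le" and "t \<in> S" and "\<forall>q\<in>S. le t q \<longrightarrow> q = t"
  shows "mobius_row S le rk t = 1"
proof -
  have "mobius_row S le rk t = mobius_z S le rk t t + (\<Sum>q\<in>S - {t}. mobius_z S le rk t q)"
    unfolding mobius_row_def by (rule sum.remove[OF fin \<open>t \<in> S\<close>])
  also have "(\<Sum>q\<in>S - {t}. mobius_z S le rk t q) = 0"
    using assms(4) mobius_z_eq_0[OF fin po] by (intro sum.neutral) blast
  finally show ?thesis
    using mobius_self[OF fin po \<open>t \<in> S\<close>] by (simp add: mobius_z_def)
qed

lemma mobius_row_order_iso:
  assumes finS: "finite S" and poS: "poset_on S le" and finT: "finite T" and poT: "poset_on T le'"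
    and p: "p \<in> S"
    and bij: "bij_betw f {s\<in>S. le p s} {t\<in>T. le' (f p) t}"
    and iso: "\<forall>x\<in>{s\<in>S. le p s}. \<forall>y\<in>{s\<in>S. le p s}. le' (f x) (f y) \<longleftrightarrow> le x y"
    and rk: "\<forall>q\<in>{s\<in>S. le p s}. rk' (f q) - rk' (f p) = rk q - rk p"
  shows "mobius_row T le' rk' (f p) = mobius_row S le rk p"
proof -
  have pA: "p \<in> {s\<in>S. le p s}" using p poset_on_refl[OF poS] by blast
  have fpT: "f p \<in> T" using bij pA by (auto simp: bij_betw_def)
  have "mobius T le' (f p) (f q) = mobius S le p q" if "q \<in> {s\<in>S. le p s}" for q
  proof (rule mobius_order_iso[OF finS poS finT poT bij _ _ iso _ _ pA that])
    show "order_convex S le {s\<in>S. le p s}"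
      unfolding order_convex_def using p by (blast intro: poset_on_trans[OF poS])
    show "order_convex T le' {t\<in>T. le' (f p) t}"
      unfolding order_convex_def using fpT by (blast intro: poset_on_trans[OF poT])
  qed auto
  then have row: "mobius_z T le' rk' (f p) (f q) = mobius_z S le rk p q" if "q \<in> {s\<in>S. le p s}" for q
    using rk that by (simp add: mobius_z_def)
  have "mobius_row T le' rk' (f p) = (\<Sum>q\<in>{t\<in>T. le' (f p) t}. mobius_z T le' rk' (f p) q)"
    unfolding mobius_row_def
    by (rule sum.mono_neutral_right) (use finT mobius_z_eq_0[OF finT poT] in auto)
  also have "\<dots> = (\<Sum>q\<in>{s\<in>S. le p s}. mobius_z T le' rk' (f p) (f q))"
    by (rule sum.reindex_bij_betw[symmetric]) (rule bij)
  also have "\<dots> = (\<Sum>q\<in>{s\<in>S. le p s}. mobius_z S le rk p q)"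
    using row by (rule sum.cong[OF refl])
  also have "\<dots> = mobius_row S le rk p"
    unfolding mobius_row_def
    by (rule sum.mono_neutral_left) (use finS mobius_z_eq_0[OF finS poS] in auto)
  finally show ?thesis .
qed

section \<open>Face posets of polytopes\<close>

lemma convex_hull_vertex_set_face:
  fixes K :: "'a::euclidean_space set"
  assumes "polytope K" "F face_of K"
  shows "convex hull (vertex_set F) = F"
proof -
  have "compact F"
    using assms face_of_imp_compact polytope_imp_compact polytope_imp_convex by blast
  then show ?thesis
    using assms Krein_Milman_Minkowski face_of_imp_convex unfolding vertex_set_def by blast
qed

lemma face_rank_vertex_set_face:
  fixes K :: "'a::euclidean_space set"
  assumes "polytope K" "F face_of K"
  shows "face_rank (vertex_set F) = aff_dim F"
  using convex_hull_vertex_set_face[OF assms] unfolding face_rank_def by simp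

lemma face_poset_eq_image: "face_poset K = vertex_set ` {F. F face_of K}"
  unfolding face_poset_def by blast

lemma finite_face_poset: "polytope (K::'a::euclidean_space set) \<Longrightarrow> finite (face_poset K)"
  unfolding face_poset_eq_image by (intro finite_imageI finite_polytope_faces)

lemma vertex_set_in_face_poset:
  "polytope (K::'a::euclidean_space set) \<Longrightarrow> vertex_set K \<in> face_poset K"
  unfolding face_poset_eq_image by (simp add: face_of_refl polytope_imp_convex)

lemma face_poset_subset_vertex_set: "s \<in> face_poset K \<Longrightarrow> s \<subseteq> vertex_set K"
  unfolding face_poset_eq_image vertex_set_def using extreme_point_of_face by blast

lemma face_rank_vertex_set:
  "polytope (K::'a::euclidean_space set) \<Longrightarrow> face_rank (vertex_set K) = aff_dim K"
  by (simp add: face_of_refl face_rank_vertex_set_face polytope_imp_convex)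

lemma face_rank_less:
  fixes K :: "'a::euclidean_space set"
  assumes K: "polytope K" and "s \<in> face_poset K" "s \<noteq> vertex_set K"
  shows "face_rank s < aff_dim K"
proof -
  obtain F where F: "F face_of K" "s = vertex_set F" "F \<noteq> K"
    using assms unfolding face_poset_eq_image by blast
  then show ?thesis
    using face_rank_vertex_set_face[OF K] face_of_aff_dim_lt[OF polytope_imp_convex[OF K]] by simp
qed

lemma face_poset_above_facet:
  fixes K :: "'a::euclidean_space set"
  assumes K: "polytope K" and "t \<in> face_poset K" "face_rank t = aff_dim K - 1"
    and "s \<in> face_poset K" "t \<subseteq> s"
  shows "s = t \<or> s = vertex_set K"
proof -
  obtain F G where F: "F face_of K" "t = vertex_set F" and G: "G face_of K" "s = vertex_set G"
    using assms unfolding face_poset_eq_image by blast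
  have "F \<subseteq> G"
    using hull_mono[OF \<open>t \<subseteq> s\<close>, of convex] F G convex_hull_vertex_set_face[OF K] by simp
  then have FG: "F face_of G" using F G face_of_subset face_of_imp_subset by blast
  have "aff_dim F = aff_dim K - 1" using assms F face_rank_vertex_set_face[OF K] by simp
  moreover have "G \<noteq> K \<Longrightarrow> aff_dim G < aff_dim K"
    using face_of_aff_dim_lt[OF polytope_imp_convex[OF K] G(1)] by blast
  moreover have "F \<noteq> G \<Longrightarrow> aff_dim F < aff_dim G"
    using face_of_aff_dim_lt[OF face_of_imp_convex[OF G(1)] FG] by blast
  ultimately have "F = G \<or> G = K" by linarith
  then show ?thesis using F G by blast
qed

section \<open>A polytope with a facet identified with another polytope\<close>

locale facet_embedding =
  fixes K :: "'a::euclidean_space set" and KR :: "'c::euclidean_space set" and d :: nat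
    and F :: "'a set" and phi :: "'c set \<Rightarrow> 'a set"
  assumes polytope: "polytope K" and aff_dim: "aff_dim K = int d"
    and polytope_R: "polytope KR"
    and facet: "F \<in> face_poset K" and rank_facet: "face_rank F = int d - 1"
    and bij_phi: "bij_betw phi (face_poset KR) {s \<in> face_poset K. s \<subseteq> F}"
    and phi_subset_iff: "\<forall>r\<in>face_poset KR. \<forall>s\<in>face_poset KR. (phi r \<subseteq> phi s) = (r \<subseteq> s)"
    and rank_phi: "\<forall>r\<in>face_poset KR. face_rank (phi r) = face_rank r"
begin

abbreviation "faces \<equiv> face_poset K"
abbreviation "faces_R \<equiv> face_poset KR"
abbreviation "top_face \<equiv> vertex_set K"
abbreviation "top_face_R \<equiv> vertex_set KR"
abbreviation "proper_faces_R \<equiv> faces_R - {top_face_R}"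
abbreviation "outer_faces \<equiv> faces - ({s\<in>faces. s \<subseteq> F} \<union> {top_face})"

lemma finite_faces: "finite faces" and finite_faces_R: "finite faces_R"
  using finite_face_poset polytope polytope_R by auto

lemma top_in_faces: "top_face \<in> faces" and top_R_in_faces_R: "top_face_R \<in> faces_R"
  using vertex_set_in_face_poset polytope polytope_R by auto

lemma face_rank_top: "face_rank top_face = int d"
  using face_rank_vertex_set[OF polytope] aff_dim by simp

lemma above_facet: "s \<in> faces \<Longrightarrow> F \<subseteq> s \<Longrightarrow> s = F \<or> s = top_face"
  using face_poset_above_facet[OF polytope facet] rank_facet aff_dim by simp

lemma facet_ne_top: "F \<noteq> top_face"
  using rank_facet face_rank_top by auto

lemma image_phi: "phi ` faces_R = {s\<in>faces. s \<subseteq> F}"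
  using bij_phi by (simp add: bij_betw_def)

lemma phi_in_faces: "r \<in> faces_R \<Longrightarrow> phi r \<in> faces"
  and phi_subset_facet: "r \<in> faces_R \<Longrightarrow> phi r \<subseteq> F"
  using bij_phi by (auto simp: bij_betw_def)

lemma not_subset_phi: "\<not> a \<subseteq> F \<Longrightarrow> r \<in> faces_R \<Longrightarrow> \<not> a \<subseteq> phi r"
  using phi_subset_facet by blast

lemma phi_subset_phi_iff: "r \<in> faces_R \<Longrightarrow> s \<in> faces_R \<Longrightarrow> phi r \<subseteq> phi s \<longleftrightarrow> r \<subseteq> s"
  using phi_subset_iff by blast

lemma phi_mono: "r \<subseteq> s \<Longrightarrow> r \<in> faces_R \<Longrightarrow> s \<in> faces_R \<Longrightarrow> phi r \<subseteq> phi s"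
  using phi_subset_iff by blast

lemma inj_phi: "inj_on phi faces_R"
  using bij_phi by (rule bij_betw_imp_inj_on)

lemma phi_ne_top: "r \<in> faces_R \<Longrightarrow> phi r \<noteq> top_face"
  using phi_subset_facet face_poset_subset_vertex_set[OF facet] facet_ne_top by blast

lemma phi_top_R: "phi top_face_R = F"
proof -
  have "F \<in> phi ` faces_R" using image_phi facet by blast
  then obtain s where s: "s \<in> faces_R" "phi s = F" by blast
  then have "top_face_R \<subseteq> s"
    using phi_subset_iff top_R_in_faces_R phi_subset_facet[OF top_R_in_faces_R] by blast
  then have "s = top_face_R"
    using s(1) face_poset_subset_vertex_set by blast
  then show ?thesis
    using s(2) by simp
qed

lemma phi_eq_facet_iff: "r \<in> faces_R \<Longrightarrow> phi r = F \<longleftrightarrow> r = top_face_R"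
  using inj_phi top_R_in_faces_R phi_top_R by (auto dest: inj_onD)

lemma face_rank_phi: "r \<in> faces_R \<Longrightarrow> face_rank (phi r) = face_rank r"
  using rank_phi by blast

lemma face_rank_top_R: "face_rank top_face_R = int d - 1"
  using rank_phi top_R_in_faces_R phi_top_R rank_facet by auto

lemma face_rank_R_less: "s \<in> faces_R \<Longrightarrow> s \<noteq> top_face_R \<Longrightarrow> face_rank s < int d - 1"
  using face_rank_less[OF polytope_R] face_rank_vertex_set[OF polytope_R] face_rank_top_R by simp

lemma sum_faces_split:
  "(\<Sum>b\<in>faces. g b) = (\<Sum>a\<in>outer_faces. g a) + (\<Sum>s\<in>faces_R. g (phi s)) + g top_face"
proof -
  have "faces = insert top_face (outer_faces \<union> phi ` faces_R)"
    using image_phi top_in_faces by blast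
  then have "(\<Sum>b\<in>faces. g b) = (\<Sum>b\<in>insert top_face (outer_faces \<union> phi ` faces_R). g b)"
    by (rule arg_cong)
  also have "\<dots> = g top_face + (\<Sum>b\<in>outer_faces \<union> phi ` faces_R. g b)"
    using phi_ne_top facet_ne_top face_poset_subset_vertex_set[OF facet] finite_faces finite_faces_R
    by (intro sum.insert) auto
  also have "(\<Sum>b\<in>outer_faces \<union> phi ` faces_R. g b) = (\<Sum>a\<in>outer_faces. g a) + (\<Sum>b\<in>phi ` faces_R. g b)"
    using image_phi finite_faces finite_faces_R by (intro sum.union_disjoint) auto
  finally show ?thesis
    by (simp add: sum.reindex[OF inj_phi] add_ac)
qed

lemma mobius_phi:
  assumes "r \<in> faces_R" "s \<in> faces_R"
  shows "mobius faces (\<subseteq>) (phi r) (phi s) = mobius faces_R (\<subseteq>) r s"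
proof (rule mobius_order_iso[OF finite_faces_R poset_on_subset finite_faces poset_on_subset bij_phi])
  show "order_convex faces (\<subseteq>) {s\<in>faces. s \<subseteq> F}"
    unfolding order_convex_def by blast
qed (use assms phi_subset_iff in auto)

abbreviation "mz \<equiv> mobius_z faces (\<subseteq>) face_rank"
abbreviation "mz_R \<equiv> mobius_z faces_R (\<subseteq>) face_rank"
abbreviation "mrow \<equiv> mobius_row faces (\<subseteq>) face_rank"
abbreviation "mrow_R \<equiv> mobius_row faces_R (\<subseteq>) face_rank"

lemma sum_faces_R_split: "(\<Sum>s\<in>faces_R. g s) = (\<Sum>s\<in>proper_faces_R. g s) + g top_face_R"
  using sum.remove[OF finite_faces_R top_R_in_faces_R, of g] by (simp add: add.commute)

lemma row_top: "mrow top_face = 1"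
  using finite_faces top_in_faces face_poset_subset_vertex_set
  by (intro mobius_row_maximal poset_on_subset) blast+

lemma row_R_top: "mrow_R top_face_R = 1"
  using finite_faces_R top_R_in_faces_R face_poset_subset_vertex_set
  by (intro mobius_row_maximal poset_on_subset) blast+

lemma row_facet: "mrow F = [:1, -1:]"
proof -
  have "mrow F = (\<Sum>q\<in>{F, top_face}. mz F q)"
    unfolding mobius_row_def
  proof (rule sum.mono_neutral_right)
    show "\<forall>q\<in>faces - {F, top_face}. mz F q = 0"
      using above_facet mobius_z_eq_0[OF finite_faces poset_on_subset] by blast
  qed (use finite_faces facet top_in_faces in auto)
  also have "\<dots> = mz F F + mz F top_face"
    using facet_ne_top by simp
  also have "mobius faces (\<subseteq>) F top_face = -1"
  proof -
    have "{s\<in>faces. F \<subseteq> s \<and> s \<subseteq> top_face \<and> s \<noteq> top_face} = {F}"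
      using above_facet facet facet_ne_top face_poset_subset_vertex_set by blast
    then show ?thesis
      unfolding mobius_rec[OF finite_faces poset_on_subset, of F top_face]
      using facet top_in_faces facet_ne_top face_poset_subset_vertex_set[OF facet]
        mobius_self[OF finite_faces poset_on_subset facet] by simp
  qed
  then have "mz F top_face = monom (-1) 1"
    unfolding mobius_z_def using face_rank_top rank_facet by simp
  also have "mz F F = 1"
    unfolding mobius_z_def using mobius_self[OF finite_faces poset_on_subset facet] by simp
  finally show ?thesis by (simp add: monom_altdef one_pCons)
qed

lemma row_phi:
  assumes "r \<in> faces_R"
  shows "mrow (phi r) = (\<Sum>a\<in>outer_faces. mz (phi r) a) + mrow_R r + mz (phi r) top_face"
proof -
  have "mz (phi r) (phi s) = mz_R r s" if "s \<in> faces_R" for s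
    using mobius_phi[OF assms that] rank_phi assms that by (simp add: mobius_z_def)
  then show ?thesis
    unfolding mobius_row_def sum_faces_split[of "mz (phi r)"] by simp
qed

lemma sum_mobius_R_eq_0:
  assumes "r \<in> proper_faces_R"
  shows "(\<Sum>s\<in>faces_R. mobius faces_R (\<subseteq>) r s) = 0"
proof -
  have "{s\<in>faces_R. s \<subseteq> top_face_R} = faces_R"
    using face_poset_subset_vertex_set by blast
  then show ?thesis
    using sum_mobius_below_eq_0[OF finite_faces_R poset_on_subset, of r top_face_R]
      assms top_R_in_faces_R face_poset_subset_vertex_set[of r KR]
    by simp
qed

lemma sum_mobius_outer_faces:
  assumes r: "r \<in> proper_faces_R"
  shows "(\<Sum>a\<in>outer_faces. mobius faces (\<subseteq>) (phi r) a) = - mobius faces (\<subseteq>) (phi r) top_face"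
proof -
  have "{s\<in>faces. s \<subseteq> top_face} = faces"
    using face_poset_subset_vertex_set by blast
  then have "(\<Sum>b\<in>faces. mobius faces (\<subseteq>) (phi r) b) = 0"
    using sum_mobius_below_eq_0[OF finite_faces poset_on_subset, of "phi r" top_face]
      r top_in_faces phi_in_faces phi_ne_top face_poset_subset_vertex_set[of "phi r" K]
    by simp
  then show ?thesis
    unfolding sum_faces_split using mobius_phi r sum_mobius_R_eq_0[OF r] by simp
qed

lemma mobius_poly_split:
  "mobius_poly faces (\<subseteq>) face_rank
     = (\<Sum>a\<in>outer_faces. mrow a) + (\<Sum>s\<in>proper_faces_R. mrow (phi s)) + [:1, -1:] + 1"
  unfolding mobius_poly_eq_sum_rows[OF finite_faces poset_on_subset] sum_faces_split
    sum_faces_R_split phi_top_R row_facet row_top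
  by (simp add: add.assoc)

lemma mobius_poly_R_split:
  "mobius_poly faces_R (\<subseteq>) face_rank = (\<Sum>s\<in>proper_faces_R. mrow_R s) + 1"
  unfolding mobius_poly_eq_sum_rows[OF finite_faces_R poset_on_subset] sum_faces_R_split row_R_top ..

lemma top_poly_R_split:
  "top_poly faces_R (\<subseteq>) face_rank (int d - 1) = (\<Sum>s\<in>proper_faces_R. mz_R s top_face_R) + 1"
proof -
  have "{(p, q). p \<in> faces_R \<and> q \<in> faces_R \<and> p \<subseteq> q \<and> face_rank p \<le> int d - 1 \<and> int d - 1 \<le> face_rank q}
      = (\<lambda>p. (p, top_face_R)) ` faces_R"
    using face_rank_R_less face_rank_top_R top_R_in_faces_R face_poset_subset_vertex_set
    by (force simp: not_less[symmetric])
  then have "top_poly faces_R (\<subseteq>) face_rank (int d - 1) = (\<Sum>s\<in>faces_R. mz_R s top_face_R)"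
    unfolding top_poly_def by (simp add: sum.reindex inj_on_def)
  also have "\<dots> = (\<Sum>s\<in>proper_faces_R. mz_R s top_face_R) + 1"
    unfolding sum_faces_R_split
    using mobius_self[OF finite_faces_R poset_on_subset top_R_in_faces_R] by (simp add: mobius_z_def)
  finally show ?thesis .
qed

end

section \<open>The glued poset\<close>

lemma mem_gl_carrier [simp]:
  "GP a \<in> gl_carrier P Q R FP FQ tP tQ tR \<longleftrightarrow> a \<in> P \<and> \<not> a \<subseteq> FP \<and> a \<noteq> tP"
  "GQ b \<in> gl_carrier P Q R FP FQ tP tQ tR \<longleftrightarrow> b \<in> Q \<and> \<not> b \<subseteq> FQ \<and> b \<noteq> tQ"
  "GR r \<in> gl_carrier P Q R FP FQ tP tQ tR \<longleftrightarrow> r \<in> R \<and> r \<noteq> tR"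
  "GTop \<in> gl_carrier P Q R FP FQ tP tQ tR"
  unfolding gl_carrier_def by auto

lemma finite_gl_carrier:
  "finite P \<Longrightarrow> finite Q \<Longrightarrow> finite R \<Longrightarrow> finite (gl_carrier P Q R FP FQ tP tQ tR)"
  unfolding gl_carrier_def by simp

lemma sum_gl_carrier:
  assumes "finite P" "finite Q" "finite R"
  shows "(\<Sum>x\<in>gl_carrier P Q R FP FQ tP tQ tR. g x)
    = (\<Sum>a\<in>P - ({s\<in>P. s \<subseteq> FP} \<union> {tP}). g (GP a)) + (\<Sum>b\<in>Q - ({s\<in>Q. s \<subseteq> FQ} \<union> {tQ}). g (GQ b))
      + (\<Sum>r\<in>R - {tR}. g (GR r)) + g GTop"
proof -
  let ?P0 = "P - ({s\<in>P. s \<subseteq> FP} \<union> {tP})" and ?Q0 = "Q - ({s\<in>Q. s \<subseteq> FQ} \<union> {tQ})"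
  have fin: "finite (GP ` ?P0)" "finite (GQ ` ?Q0)" "finite (GR ` (R - {tR}))"
    using assms by auto
  have "(\<Sum>x\<in>gl_carrier P Q R FP FQ tP tQ tR. g x)
      = (\<Sum>x\<in>GP ` ?P0 \<union> GQ ` ?Q0 \<union> GR ` (R - {tR}). g x) + g GTop"
    unfolding gl_carrier_def using fin by (subst sum.union_disjoint) auto
  also have "(\<Sum>x\<in>GP ` ?P0 \<union> GQ ` ?Q0 \<union> GR ` (R - {tR}). g x)
      = (\<Sum>x\<in>GP ` ?P0. g x) + (\<Sum>x\<in>GQ ` ?Q0. g x) + (\<Sum>x\<in>GR ` (R - {tR}). g x)"
    using fin by (subst sum.union_disjoint; (subst sum.union_disjoint)?) auto
  finally show ?thesis
    by (simp add: sum.reindex inj_on_def)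
qed

text \<open>\<open>Gl(P,Q,R)\<close> and \<open>Gl(Q,P,R)\<close> are isomorphic; this transfers everything proved about
  the \<open>P\<close>-part to the \<open>Q\<close>-part.\<close>

fun gl_swap :: "('p, 'q, 'r) glel \<Rightarrow> ('q, 'p, 'r) glel" where
  "gl_swap (GP a) = GQ a"
| "gl_swap (GQ b) = GP b"
| "gl_swap (GR r) = GR r"
| "gl_swap GTop = GTop"

lemma gl_swap_swap [simp]: "gl_swap (gl_swap x) = x"
  by (cases x) simp_all

lemma gl_swap_mem_gl_carrier [simp]:
  "gl_swap x \<in> gl_carrier Q P R FQ FP tQ tP tR \<longleftrightarrow> x \<in> gl_carrier P Q R FP FQ tP tQ tR"
  by (cases x) simp_all

lemma bij_betw_gl_swap:
  "bij_betw gl_swap (gl_carrier P Q R FP FQ tP tQ tR) (gl_carrier Q P R FQ FP tQ tP tR)"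
  by (rule bij_betw_byWitness[of _ gl_swap]) auto

lemma gl_le_swap [simp]: "gl_le phiQ phiP (gl_swap x) (gl_swap y) = gl_le phiP phiQ x y"
  by (cases x; cases y) simp_all

lemma gl_rank_swap [simp]: "gl_rank d (gl_swap x) = gl_rank d x"
  by (cases x) simp_all

locale glue = P: facet_embedding KP KR d FP phiP + Q: facet_embedding KQ KR d FQ phiQ
  for KP :: "'a::euclidean_space set" and KQ :: "'b::euclidean_space set"
    and KR :: "'c::euclidean_space set" and d :: nat
    and FP :: "'a set" and FQ :: "'b set"
    and phiP :: "'c set \<Rightarrow> 'a set" and phiQ :: "'c set \<Rightarrow> 'b set"
begin

lemma glue_swapped: "glue KQ KP KR d FQ FP phiQ phiP"
  by (intro glue.intro Q.facet_embedding_axioms P.facet_embedding_axioms)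

abbreviation "glued \<equiv> gl_carrier P.faces Q.faces P.faces_R FP FQ P.top_face Q.top_face P.top_face_R"
abbreviation "glued_swapped \<equiv> gl_carrier Q.faces P.faces P.faces_R FQ FP Q.top_face P.top_face P.top_face_R"
abbreviation "le_gl \<equiv> gl_le phiP phiQ"
abbreviation "mobius_gl \<equiv> mobius glued le_gl"
abbreviation "mz_gl \<equiv> mobius_z glued le_gl (gl_rank d)"
abbreviation "mrow_gl \<equiv> mobius_row glued le_gl (gl_rank d)"

lemma finite_glued: "finite glued"
  using P.finite_faces Q.finite_faces P.finite_faces_R by (rule finite_gl_carrier)

lemma poset_glued: "poset_on glued le_gl"
  unfolding poset_on_def
proof (intro conjI ballI impI)
  fix x assume "x \<in> glued" then show "le_gl x x" by (cases x) auto
next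
  fix x y assume "x \<in> glued" "y \<in> glued" "le_gl x y" "le_gl y x"
  then show "x = y"
    by (cases x; cases y) (auto simp: P.not_subset_phi Q.not_subset_phi)
next
  fix x y z assume "x \<in> glued" "y \<in> glued" "z \<in> glued" "le_gl x y" "le_gl y z"
  then show "le_gl x z"
    by (cases x; cases y; cases z)
       (auto simp: P.not_subset_phi Q.not_subset_phi dest: P.phi_mono Q.phi_mono)
qed

lemma mrow_gl_GP:
  assumes a: "a \<in> P.outer_faces"
  shows "mrow_gl (GP a) = P.mrow a"
proof -
  define f :: "'a set \<Rightarrow> ('a set, 'b set, 'c set) glel"
    where "f b = (if b = P.top_face then GTop else GP b)" for b
  define g :: "('a set, 'b set, 'c set) glel \<Rightarrow> 'a set"
    where "g x = (case x of GP b \<Rightarrow> b | _ \<Rightarrow> P.top_face)" for x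
  have aP: "a \<in> P.faces" "a \<noteq> P.top_face" and a_phi: "\<And>r. r \<in> P.faces_R \<Longrightarrow> \<not> a \<subseteq> phiP r"
    using a P.not_subset_phi by auto
  have fa: "f a = GP a" using aP by (simp add: f_def)
  have above_a: "\<not> b \<subseteq> FP" if "a \<subseteq> b" for b
    using a that by blast
  have "mobius_row glued le_gl (gl_rank d) (f a) = P.mrow a"
  proof (rule mobius_row_order_iso[OF P.finite_faces poset_on_subset finite_glued poset_glued aP(1)])
    show "bij_betw f {s\<in>P.faces. a \<subseteq> s} {t\<in>glued. le_gl (f a) t}"
    proof (rule bij_betw_byWitness[where f' = g])
      show "f ` {s\<in>P.faces. a \<subseteq> s} \<subseteq> {t\<in>glued. le_gl (f a) t}"
        using above_a aP by (auto simp: f_def fa)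
      have "g t \<in> P.faces \<and> a \<subseteq> g t \<and> f (g t) = t" if "t \<in> glued" "le_gl (GP a) t" for t
        using that a_phi P.top_in_faces face_poset_subset_vertex_set[OF aP(1)]
        by (cases t) (simp_all add: f_def g_def)
      then show "g ` {t\<in>glued. le_gl (f a) t} \<subseteq> {s\<in>P.faces. a \<subseteq> s}"
        and "\<forall>t\<in>{t\<in>glued. le_gl (f a) t}. f (g t) = t"
        unfolding fa by auto
    qed (simp add: f_def g_def)
    show "\<forall>x\<in>{s\<in>P.faces. a \<subseteq> s}. \<forall>y\<in>{s\<in>P.faces. a \<subseteq> s}. le_gl (f x) (f y) \<longleftrightarrow> x \<subseteq> y"
      using face_poset_subset_vertex_set by (auto simp: f_def)
    show "\<forall>q\<in>{s\<in>P.faces. a \<subseteq> s}. gl_rank d (f q) - gl_rank d (f a) = face_rank q - face_rank a"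
      using P.face_rank_top by (simp add: f_def fa)
  qed
  then show ?thesis by (simp add: fa)
qed

lemma mobius_gl_swap:
  assumes "x \<in> glued" "y \<in> glued"
  shows "mobius glued_swapped (gl_le phiQ phiP) (gl_swap x) (gl_swap y) = mobius_gl x y"
  by (rule mobius_order_iso[OF finite_glued poset_glued glue.finite_glued[OF glue_swapped]
        glue.poset_glued[OF glue_swapped] bij_betw_gl_swap])
     (use assms in auto)

lemma mrow_gl_swap:
  assumes "x \<in> glued"
  shows "mobius_row glued_swapped (gl_le phiQ phiP) (gl_rank d) (gl_swap x) = mrow_gl x"
  unfolding mobius_row_def
  by (subst sum.reindex_bij_betw[OF bij_betw_gl_swap, symmetric])
     (simp add: mobius_z_def mobius_gl_swap assms)

lemma mrow_gl_GQ: "b \<in> Q.outer_faces \<Longrightarrow> mrow_gl (GQ b) = Q.mrow b"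
  using mrow_gl_swap[of "GQ b"] glue.mrow_gl_GP[OF glue_swapped, of b] by simp

definition P_side :: "('a set, 'b set, 'c set) glel set" where
  "P_side = GP ` P.outer_faces \<union> GR ` P.proper_faces_R"

definition P_face :: "('a set, 'b set, 'c set) glel \<Rightarrow> 'a set" where
  "P_face x = (case x of GP a \<Rightarrow> a | GR r \<Rightarrow> phiP r | _ \<Rightarrow> P.top_face)"

lemma bij_betw_P_face: "bij_betw P_face P_side (P.faces - {FP, P.top_face})"
  unfolding bij_betw_def
proof
  show "inj_on P_face P_side"
  proof (rule inj_onI)
    fix x y assume "x \<in> P_side" "y \<in> P_side" "P_face x = P_face y"
    then show "x = y"
      unfolding P_side_def using P.not_subset_phi P.inj_phi
      by (elim UnE imageE) (auto simp: P_face_def dest: inj_onD)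
  qed
  show "P_face ` P_side = P.faces - {FP, P.top_face}"
  proof (intro equalityI subsetI)
    fix b assume "b \<in> P_face ` P_side"
    then show "b \<in> P.faces - {FP, P.top_face}"
      unfolding P_side_def using P.phi_in_faces P.phi_eq_facet_iff P.phi_ne_top
      by (elim imageE UnE) (auto simp: P_face_def)
  next
    fix b assume b: "b \<in> P.faces - {FP, P.top_face}"
    show "b \<in> P_face ` P_side"
    proof (cases "b \<subseteq> FP")
      case True
      then obtain s where s: "s \<in> P.faces_R" "b = phiP s" using b P.image_phi by blast
      then have "s \<noteq> P.top_face_R" using b P.phi_top_R by blast
      then have "GR s \<in> P_side" using s by (simp add: P_side_def)
      then show ?thesis using s by (intro rev_image_eqI[of "GR s"]) (simp_all add: P_face_def)
    next
      case False
      then have "GP b \<in> P_side" using b by (simp add: P_side_def)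
      then show ?thesis by (intro rev_image_eqI[of "GP b"]) (simp_all add: P_face_def)
    qed
  qed
qed

lemma mobius_gl_P_side:
  assumes "x \<in> P_side" "y \<in> P_side"
  shows "mobius_gl x y = mobius P.faces (\<subseteq>) (P_face x) (P_face y)"
proof (rule mobius_order_iso[OF finite_glued poset_glued P.finite_faces poset_on_subset
      bij_betw_P_face _ _ _ _ _ assms, symmetric])
  show "P_side \<subseteq> glued" by (auto simp: P_side_def)
  show "\<forall>x\<in>P_side. \<forall>y\<in>P_side. P_face x \<subseteq> P_face y \<longleftrightarrow> le_gl x y"
    unfolding P_side_def by (simp add: ball_Un P_face_def P.phi_subset_phi_iff)
  show "order_convex glued le_gl P_side"
    unfolding order_convex_def
  proof (intro ballI impI)
    fix x y z assume "x \<in> P_side" "z \<in> P_side" "y \<in> glued" "le_gl y z"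
    then show "y \<in> P_side"
    proof (cases y)
      case (GQ b)
      then have "\<not> b \<subseteq> FQ" using \<open>y \<in> glued\<close> by simp
      then show ?thesis
        using \<open>z \<in> P_side\<close> \<open>le_gl y z\<close> GQ Q.not_subset_phi[OF \<open>\<not> b \<subseteq> FQ\<close>]
        unfolding P_side_def by auto
    qed (auto simp: P_side_def)
  qed
  show "order_convex P.faces (\<subseteq>) (P.faces - {FP, P.top_face})"
    unfolding order_convex_def
  proof (intro ballI impI)
    fix x y z assume z: "z \<in> P.faces - {FP, P.top_face}" and y: "y \<in> P.faces" "y \<subseteq> z"
    have "y \<noteq> FP" using P.above_facet[of z] y z by blast
    moreover have "y \<noteq> P.top_face" using face_poset_subset_vertex_set[of z KP] y z by blast
    ultimately show "y \<in> P.faces - {FP, P.top_face}" using y by blast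
  qed
qed auto

lemma mobius_gl_GR_GP:
  "r \<in> P.proper_faces_R \<Longrightarrow> a \<in> P.outer_faces \<Longrightarrow> mobius_gl (GR r) (GP a) = mobius P.faces (\<subseteq>) (phiP r) a"
  using mobius_gl_P_side[of "GR r" "GP a"] by (simp add: P_side_def P_face_def)

lemma mobius_gl_GR_GR:
  "r \<in> P.proper_faces_R \<Longrightarrow> s \<in> P.proper_faces_R \<Longrightarrow> mobius_gl (GR r) (GR s) = mobius P.faces_R (\<subseteq>) r s"
  using mobius_gl_P_side[of "GR r" "GR s"] P.mobius_phi by (simp add: P_side_def P_face_def)

lemma mobius_gl_GR_GQ:
  "r \<in> P.proper_faces_R \<Longrightarrow> b \<in> Q.outer_faces \<Longrightarrow> mobius_gl (GR r) (GQ b) = mobius Q.faces (\<subseteq>) (phiQ r) b"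
  using mobius_gl_swap[of "GR r" "GQ b"] glue.mobius_gl_GR_GP[OF glue_swapped, of r b] by simp

lemma mobius_gl_GR_top:
  assumes r: "r \<in> P.proper_faces_R"
  shows "mobius_gl (GR r) GTop = mobius P.faces (\<subseteq>) (phiP r) P.top_face
    + mobius Q.faces (\<subseteq>) (phiQ r) Q.top_face + mobius P.faces_R (\<subseteq>) r P.top_face_R"
proof -
  have "(\<Sum>x\<in>glued. mobius_gl (GR r) x) = 0"
    using sum_mobius_below_eq_0[OF finite_glued poset_glued, of "GR r" GTop] r by simp
  then have "(\<Sum>a\<in>P.outer_faces. mobius P.faces (\<subseteq>) (phiP r) a)
      + (\<Sum>b\<in>Q.outer_faces. mobius Q.faces (\<subseteq>) (phiQ r) b)
      + (\<Sum>s\<in>P.proper_faces_R. mobius P.faces_R (\<subseteq>) r s) + mobius_gl (GR r) GTop = 0"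
    unfolding sum_gl_carrier[OF P.finite_faces Q.finite_faces P.finite_faces_R]
    using r by (simp add: mobius_gl_GR_GP mobius_gl_GR_GQ mobius_gl_GR_GR)
  then show ?thesis
    using P.sum_mobius_outer_faces[OF r] Q.sum_mobius_outer_faces[OF r] P.sum_mobius_R_eq_0[OF r]
    unfolding P.sum_faces_R_split by linarith
qed

lemma mrow_gl_GR:
  assumes r: "r \<in> P.proper_faces_R"
  shows "mrow_gl (GR r)
    = P.mrow (phiP r) + Q.mrow (phiQ r) - P.mrow_R r - [:1, -1:] * P.mz_R r P.top_face_R"
proof -
  have rank: "face_rank (phiP r) = face_rank r" "face_rank (phiQ r) = face_rank r"
    using r P.face_rank_phi Q.face_rank_phi by auto
  have "face_rank r < int d - 1" using P.face_rank_R_less r by blast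
  then have "nat (int d - face_rank r) = Suc (nat (int d - 1 - face_rank r))"
    by (simp add: Suc_nat_eq_nat_zadd1)
  then have top: "mz_gl (GR r) GTop
      = P.mz (phiP r) P.top_face + Q.mz (phiQ r) Q.top_face + [:0, 1:] * P.mz_R r P.top_face_R"
    unfolding mobius_z_def mobius_gl_GR_top[OF r]
    using P.face_rank_top Q.face_rank_top P.face_rank_top_R rank by (simp add: add_monom monom_Suc)
  have "mrow_gl (GR r) = (\<Sum>a\<in>P.outer_faces. P.mz (phiP r) a) + (\<Sum>b\<in>Q.outer_faces. Q.mz (phiQ r) b)
      + (\<Sum>s\<in>P.proper_faces_R. P.mz_R r s) + mz_gl (GR r) GTop"
    unfolding mobius_row_def sum_gl_carrier[OF P.finite_faces Q.finite_faces P.finite_faces_R]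
    using r rank by (simp add: mobius_z_def mobius_gl_GR_GP mobius_gl_GR_GQ mobius_gl_GR_GR)
  then show ?thesis
    using P.row_phi[of r] Q.row_phi[of r] r
    unfolding top mobius_row_def[of P.faces_R] P.sum_faces_R_split
    by (simp add: algebra_simps)
qed

lemma mrow_gl_top: "mrow_gl GTop = 1"
proof (rule mobius_row_maximal[OF finite_glued poset_glued])
  show "\<forall>q\<in>glued. le_gl GTop q \<longrightarrow> q = GTop"
    by (intro ballI impI) (metis gl_le.simps(2-4) glel.exhaust)
qed simp

lemma mobius_poly_glued:
  "mobius_poly glued le_gl (gl_rank d)
     = mobius_poly P.faces (\<subseteq>) face_rank + mobius_poly Q.faces (\<subseteq>) face_rank
       - mobius_poly P.faces_R (\<subseteq>) face_rank - 1 + [:0, 1:]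
       - [:1, -1:] * top_poly P.faces_R (\<subseteq>) face_rank (int d - 1)"
proof -
  have "mobius_poly glued le_gl (gl_rank d)
      = (\<Sum>a\<in>P.outer_faces. P.mrow a) + (\<Sum>b\<in>Q.outer_faces. Q.mrow b)
        + (\<Sum>s\<in>P.proper_faces_R. P.mrow (phiP s) + Q.mrow (phiQ s) - P.mrow_R s
             - [:1, -1:] * P.mz_R s P.top_face_R) + 1"
    unfolding mobius_poly_eq_sum_rows[OF finite_glued poset_glued]
      sum_gl_carrier[OF P.finite_faces Q.finite_faces P.finite_faces_R]
    by (simp add: mrow_gl_GP mrow_gl_GQ mrow_gl_GR mrow_gl_top)
  moreover have one_minus_z: "[:1, -1:] = 1 - [:0, 1 :: int:]"
    by (simp add: one_pCons)
  ultimately show ?thesis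
    unfolding P.mobius_poly_split Q.mobius_poly_split P.mobius_poly_R_split P.top_poly_R_split
      one_minus_z
    by (simp add: sum.distrib sum_subtractf sum_distrib_left algebra_simps numeral_poly)
qed

end

theorem mainTheorem11:
  fixes KP :: "'a::euclidean_space set" and KQ :: "'b::euclidean_space set"
    and KR :: "'c::euclidean_space set" and d :: nat
    and FP :: "'a set" and FQ :: "'b set"
    and phiP :: "'c set \<Rightarrow> 'a set" and phiQ :: "'c set \<Rightarrow> 'b set"
  assumes "polytope KP" and "aff_dim KP = int d"
    and "polytope KQ" and "aff_dim KQ = int d"
    and "polytope KR" and "aff_dim KR = int d - 1"
    and "FP \<in> face_poset KP" and "face_rank FP = int d - 1"
    and "FQ \<in> face_poset KQ" and "face_rank FQ = int d - 1"
    and "bij_betw phiP (face_poset KR) {s \<in> face_poset KP. s \<subseteq> FP}"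
    and "\<forall>r\<in>face_poset KR. \<forall>s\<in>face_poset KR. (phiP r \<subseteq> phiP s) = (r \<subseteq> s)"
    and "\<forall>r\<in>face_poset KR. face_rank (phiP r) = face_rank r"
    and "bij_betw phiQ (face_poset KR) {s \<in> face_poset KQ. s \<subseteq> FQ}"
    and "\<forall>r\<in>face_poset KR. \<forall>s\<in>face_poset KR. (phiQ r \<subseteq> phiQ s) = (r \<subseteq> s)"
    and "\<forall>r\<in>face_poset KR. face_rank (phiQ r) = face_rank r"
  shows "mobius_poly
           (gl_carrier (face_poset KP) (face_poset KQ) (face_poset KR) FP FQ
              (vertex_set KP) (vertex_set KQ) (vertex_set KR))
           (gl_le phiP phiQ) (gl_rank d)
       = mobius_poly (face_poset KP) (\<subseteq>) face_rank
         + mobius_poly (face_poset KQ) (\<subseteq>) face_rank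
         - mobius_poly (face_poset KR) (\<subseteq>) face_rank
         - 1 + [:0, 1:]
         - [:1, -1:] * top_poly (face_poset KR) (\<subseteq>) face_rank (int d - 1)"
proof -
  interpret glue KP KQ KR d FP FQ phiP phiQ
    by (intro glue.intro facet_embedding.intro) (fact assms)+
  show ?thesis
    by (rule mobius_poly_glued)
qed

end
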